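(* There is a universal constant $\alpha>1$ such that the following holds. Let $p\ge 2$ and $k\ge1$ be integers and put $r=r(p,k)=\alpha\, p\log(pk)$. Let $n\ge 1$ and let $S_1,\dots,S_\ell\subseteq[n]$ be a sequence of sets, each of size $k$, with $\ell> r^k$, which is $r$-spread. Then there are $p$ distinct indices $i_1,\dots,i_p\in[\ell]$ such that $S_{i_1},\dots,S_{i_p}$ are pairwise disjoint.
   Context: A sequence (repetitions allowed) of sets $S_1,\dots,S_\ell\subseteq[n]$, each of size $k$, is called $r$-spread if for every non-empty set $Z\subseteq[n]$, the number of indices $i\in[\ell]$ with $Z\subseteq S_i$ is at most $r^{k-|Z|}$. All logarithms are base $2$. *)

theory Defs
  imports "HOL-Analysis.Analysis"
begin

definition r_spread :: "nat \<Rightarrow> nat \<Rightarrow> real \<Rightarrow> nat \<Rightarrow> (nat \<Rightarrow> nat set) \<Rightarrow> bool" where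
  "r_spread n k r l S \<longleftrightarrow>
     (\<forall>Z. Z \<subseteq> {1..n} \<longrightarrow> Z \<noteq> {} \<longrightarrow>
        real (card {i. i < l \<and> Z \<subseteq> S i}) \<le> r powr (real k - real (card Z)))"

end

theory Submission
  imports Defs
begin

text \<open>Colour the ground set randomly with \<open>q = 2p\<close> colours. Members lying inside distinct
  colour classes are disjoint, so it suffices that a class, a random subset of density \<open>1/q\<close>,
  contains no member with probability at most \<open>1/4\<close>. Write the class as a union of \<open>L \<approx> log k\<close>
  independent random subsets of density \<open>\<rho>\<close>, where \<open>(1 - \<rho>)^L = 1 - 1/q\<close>. After exposing one
  of them, \<open>W\<close>, replace each member \<open>S\<^sub>i\<close> by the smallest remainder \<open>S\<^sub>j - W\<close> over the
  members \<open>S\<^sub>j \<subseteq> W \<union> S\<^sub>i\<close>; the remainders lie inside the original members and are therefore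
  still spread. An encoding argument shows that in expectation few remainders keep more than
  half of their size, so after \<open>L\<close> rounds every member is absorbed except on an event of
  small probability.\<close>

definition binomial_weight :: "real \<Rightarrow> 'a set \<Rightarrow> 'a set \<Rightarrow> real" where
  "binomial_weight \<rho> U W = \<rho> ^ card W * (1 - \<rho>) ^ card (U - W)"

definition binomial_expectation :: "real \<Rightarrow> 'a set \<Rightarrow> ('a set \<Rightarrow> real) \<Rightarrow> real" where
  "binomial_expectation \<rho> U f = (\<Sum>W\<in>Pow U. binomial_weight \<rho> U W * f W)"

lemma binomial_weight_nonneg: "0 \<le> \<rho> \<Longrightarrow> \<rho> \<le> 1 \<Longrightarrow> 0 \<le> binomial_weight \<rho> U W"
  unfolding binomial_weight_def by simp

lemma binomial_expectation_empty: "binomial_expectation \<rho> {} f = f {}"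
  unfolding binomial_expectation_def binomial_weight_def by simp

lemma binomial_expectation_insert:
  assumes "finite U" "x \<notin> U"
  shows "binomial_expectation \<rho> (insert x U) f
       = (1 - \<rho>) * binomial_expectation \<rho> U f + \<rho> * binomial_expectation \<rho> U (\<lambda>W. f (insert x W))"
proof -
  have disj: "Pow U \<inter> insert x ` Pow U = {}" using assms(2) by auto
  have inj: "inj_on (insert x) (Pow U)"
    using assms(2) unfolding inj_on_def by (metis PowD Diff_insert_absorb in_mono)
  have without_x: "binomial_weight \<rho> (insert x U) W = (1 - \<rho>) * binomial_weight \<rho> U W"
    if "W \<in> Pow U" for W
  proof -
    have "insert x U - W = insert x (U - W)" "x \<notin> U - W" "finite (U - W)"
      using that assms by auto
    then show ?thesis unfolding binomial_weight_def by simp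
  qed
  have with_x: "binomial_weight \<rho> (insert x U) (insert x W) = \<rho> * binomial_weight \<rho> U W"
    if "W \<in> Pow U" for W
  proof -
    have "insert x U - insert x W = U - W" "x \<notin> W" "finite W"
      using that assms finite_subset by auto
    then show ?thesis unfolding binomial_weight_def by simp
  qed
  have "binomial_expectation \<rho> (insert x U) f
      = (\<Sum>W\<in>Pow U. binomial_weight \<rho> (insert x U) W * f W)
        + (\<Sum>W\<in>insert x ` Pow U. binomial_weight \<rho> (insert x U) W * f W)"
    unfolding binomial_expectation_def Pow_insert
    by (rule sum.union_disjoint) (use assms disj in auto)
  also have "(\<Sum>W\<in>insert x ` Pow U. binomial_weight \<rho> (insert x U) W * f W)
      = \<rho> * binomial_expectation \<rho> U (\<lambda>W. f (insert x W))"
    unfolding sum.reindex[OF inj] binomial_expectation_def sum_distrib_left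
    by (rule sum.cong) (auto simp: with_x)
  also have "(\<Sum>W\<in>Pow U. binomial_weight \<rho> (insert x U) W * f W) = (1 - \<rho>) * binomial_expectation \<rho> U f"
    unfolding binomial_expectation_def sum_distrib_left by (rule sum.cong) (auto simp: without_x)
  finally show ?thesis .
qed

lemma binomial_expectation_const: "finite U \<Longrightarrow> binomial_expectation \<rho> U (\<lambda>_. c) = c"
  by (induction U rule: finite_induct)
    (simp_all add: binomial_expectation_empty binomial_expectation_insert algebra_simps)

lemma binomial_expectation_add:
  "binomial_expectation \<rho> U (\<lambda>W. f W + g W) = binomial_expectation \<rho> U f + binomial_expectation \<rho> U g"
  unfolding binomial_expectation_def by (simp add: algebra_simps sum.distrib)

lemma binomial_expectation_cmult:
  "binomial_expectation \<rho> U (\<lambda>W. c * f W) = c * binomial_expectation \<rho> U f"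
  unfolding binomial_expectation_def by (simp add: algebra_simps sum_distrib_left)

lemma binomial_expectation_sum:
  "binomial_expectation \<rho> U (\<lambda>W. \<Sum>t\<in>T. f t W) = (\<Sum>t\<in>T. binomial_expectation \<rho> U (f t))"
  unfolding binomial_expectation_def by (simp add: sum_distrib_left sum.swap[of _ T])

lemma binomial_expectation_mono:
  assumes "0 \<le> \<rho>" "\<rho> \<le> 1" "\<And>W. W \<subseteq> U \<Longrightarrow> f W \<le> g W"
  shows "binomial_expectation \<rho> U f \<le> binomial_expectation \<rho> U g"
  unfolding binomial_expectation_def
  by (intro sum_mono mult_left_mono binomial_weight_nonneg) (use assms in auto)

lemma binomial_expectation_card:
  assumes "finite U" "\<And>W. W \<subseteq> U \<Longrightarrow> finite (B W)"
  shows "binomial_expectation \<rho> U (\<lambda>W. real (card (B W)))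
       = (\<Sum>p\<in>Sigma (Pow U) B. binomial_weight \<rho> U (fst p))"
proof -
  have "binomial_expectation \<rho> U (\<lambda>W. real (card (B W)))
      = (\<Sum>W\<in>Pow U. \<Sum>b\<in>B W. binomial_weight \<rho> U W)"
    unfolding binomial_expectation_def by (simp add: mult.commute)
  also have "\<dots> = (\<Sum>(W, b)\<in>Sigma (Pow U) B. binomial_weight \<rho> U W)"
    by (rule sum.Sigma) (use assms in auto)
  finally show ?thesis by (simp add: case_prod_beta)
qed

lemma binomial_expectation_union:
  assumes "finite U"
  shows "binomial_expectation \<alpha> U (\<lambda>W1. binomial_expectation \<beta> U (\<lambda>W2. f (W1 \<union> W2)))
       = binomial_expectation (\<alpha> + \<beta> - \<alpha> * \<beta>) U f"
  using assms
proof (induction U arbitrary: f rule: finite_induct)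
  case empty
  then show ?case by (simp add: binomial_expectation_empty)
next
  case (insert x U f)
  let ?E = binomial_expectation and ?\<gamma> = "\<alpha> + \<beta> - \<alpha> * \<beta>"
  let ?f0 = "\<lambda>W1. ?E \<beta> U (\<lambda>W2. f (W1 \<union> W2))"
  let ?f1 = "\<lambda>W1. ?E \<beta> U (\<lambda>W2. f (insert x (W1 \<union> W2)))"
  have "?E \<alpha> (insert x U) (\<lambda>W1. ?E \<beta> (insert x U) (\<lambda>W2. f (W1 \<union> W2)))
     = (1 - \<beta>) * ?E \<alpha> (insert x U) ?f0 + \<beta> * ?E \<alpha> (insert x U) ?f1"
    using insert.hyps
    by (simp add: binomial_expectation_insert binomial_expectation_add binomial_expectation_cmult)
  also have "\<dots> = (1 - \<beta>) * ((1 - \<alpha>) * ?E \<alpha> U ?f0 + \<alpha> * ?E \<alpha> U ?f1)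
                 + \<beta> * ((1 - \<alpha>) * ?E \<alpha> U ?f1 + \<alpha> * ?E \<alpha> U ?f1)"
    using insert.hyps by (simp add: binomial_expectation_insert)
  also have "\<dots> = (1 - ?\<gamma>) * ?E ?\<gamma> U f + ?\<gamma> * ?E ?\<gamma> U (\<lambda>W. f (insert x W))"
    using insert.IH[of f] insert.IH[of "\<lambda>W. f (insert x W)"] by (simp add: algebra_simps)
  also have "\<dots> = ?E ?\<gamma> (insert x U) f"
    using insert.hyps by (simp add: binomial_expectation_insert)
  finally show ?case .
qed

lemma binomial_weight_le_union:
  assumes "finite U" "W \<subseteq> U" "T \<subseteq> U" "W \<inter> T = {}" "0 < \<rho>" "\<rho> \<le> 1"
  shows "binomial_weight \<rho> U W \<le> binomial_weight \<rho> U (W \<union> T) / \<rho> ^ card T"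
proof -
  have fin: "finite W" "finite T" using assms(1-3) by (auto intro: finite_subset)
  have union: "card (W \<union> T) = card W + card T" using assms fin by (simp add: card_Un_disjoint)
  have "card ((U - (W \<union> T)) \<union> T) = card (U - (W \<union> T)) + card T"
    using assms fin by (intro card_Un_disjoint) auto
  moreover have "U - W = (U - (W \<union> T)) \<union> T" using assms by auto
  ultimately have diff: "card (U - W) = card (U - (W \<union> T)) + card T" by simp
  have "binomial_weight \<rho> U W * \<rho> ^ card T
      = \<rho> ^ (card W + card T) * (1 - \<rho>) ^ (card (U - (W \<union> T)) + card T)"
    unfolding binomial_weight_def diff by (simp add: power_add)
  also have "\<dots> \<le> \<rho> ^ (card W + card T) * (1 - \<rho>) ^ card (U - (W \<union> T))"
    using assms by (intro mult_left_mono power_decreasing) auto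
  also have "\<dots> = binomial_weight \<rho> U (W \<union> T)" unfolding binomial_weight_def union ..
  finally show ?thesis using assms by (simp add: field_simps)
qed

definition remainder_candidates :: "'i set \<Rightarrow> ('i \<Rightarrow> 'a set) \<Rightarrow> 'a set \<Rightarrow> 'i \<Rightarrow> 'i set" where
  "remainder_candidates I A W i = {j\<in>I. A j \<subseteq> W \<union> A i}"

definition min_remainder :: "'i set \<Rightarrow> ('i \<Rightarrow> 'a set) \<Rightarrow> 'a set \<Rightarrow> 'i \<Rightarrow> nat" where
  "min_remainder I A W i = Min ((\<lambda>j. card (A j - W)) ` remainder_candidates I A W i)"

definition min_remainder_index :: "'i set \<Rightarrow> ('i \<Rightarrow> 'a set) \<Rightarrow> 'a set \<Rightarrow> 'i \<Rightarrow> 'i" where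
  "min_remainder_index I A W i =
     (SOME j. j \<in> remainder_candidates I A W i \<and> card (A j - W) = min_remainder I A W i)"

definition reduced_member :: "'i set \<Rightarrow> ('i \<Rightarrow> 'a set) \<Rightarrow> 'a set \<Rightarrow> 'i \<Rightarrow> 'a set" where
  "reduced_member I A W i = A (min_remainder_index I A W i) - W"

lemma min_remainder_le:
  assumes "finite I" "j \<in> remainder_candidates I A W i"
  shows "min_remainder I A W i \<le> card (A j - W)"
  unfolding min_remainder_def using assms by (auto simp: remainder_candidates_def intro!: Min_le)

lemma min_remainder_le_self:
  assumes "finite I" "i \<in> I"
  shows "min_remainder I A W i \<le> card (A i - W)"
  using assms by (intro min_remainder_le) (auto simp: remainder_candidates_def)

lemma min_remainder_index_props:
  assumes "finite I" "i \<in> I"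
  shows "min_remainder_index I A W i \<in> remainder_candidates I A W i"
    and "card (reduced_member I A W i) = min_remainder I A W i"
proof -
  have ne: "remainder_candidates I A W i \<noteq> {}" "finite (remainder_candidates I A W i)"
    using assms by (auto simp: remainder_candidates_def)
  have "min_remainder I A W i \<in> (\<lambda>j. card (A j - W)) ` remainder_candidates I A W i"
    unfolding min_remainder_def using ne by (intro Min_in) auto
  then have "\<exists>j. j \<in> remainder_candidates I A W i \<and> card (A j - W) = min_remainder I A W i"
    by force
  then have "min_remainder_index I A W i \<in> remainder_candidates I A W i
      \<and> card (A (min_remainder_index I A W i) - W) = min_remainder I A W i"
    unfolding min_remainder_index_def by (rule someI_ex)
  then show "min_remainder_index I A W i \<in> remainder_candidates I A W i"
    and "card (reduced_member I A W i) = min_remainder I A W i"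
    unfolding reduced_member_def by auto
qed

lemma reduced_member_props:
  assumes "finite I" "i \<in> I"
  shows "min_remainder_index I A W i \<in> I"
    and "A (min_remainder_index I A W i) \<subseteq> W \<union> reduced_member I A W i"
    and "reduced_member I A W i \<subseteq> A i"
    and "W \<inter> reduced_member I A W i = {}"
  using min_remainder_index_props(1)[OF assms, of A W]
  unfolding reduced_member_def remainder_candidates_def by auto

definition inner_member :: "'i set \<Rightarrow> ('i \<Rightarrow> 'a set) \<Rightarrow> 'a set \<Rightarrow> 'i" where
  "inner_member I A Z = (SOME j. j \<in> I \<and> A j \<subseteq> Z)"

lemma inner_member_props:
  assumes "j \<in> I" "A j \<subseteq> Z"
  shows "inner_member I A Z \<in> I \<and> A (inner_member I A Z) \<subseteq> Z"
  unfolding inner_member_def by (rule someI[of _ j]) (use assms in auto)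

text \<open>By minimality of the remainder, the remainder of \<open>i\<close> is cut out of \<open>Z = W \<union> T\<close> by the
  member \<open>inner_member I A Z\<close>, which depends on \<open>Z\<close> only. This is what makes
  \<open>(W, i) \<mapsto> (W \<union> T, T, i)\<close> an injection into a small set.\<close>

lemma reduced_member_recoverable:
  assumes "finite I" "i \<in> I" "finite (A i)"
  shows "reduced_member I A W i \<subseteq> A (inner_member I A (W \<union> reduced_member I A W i))"
    (is "?T \<subseteq> _")
proof -
  define T where "T = ?T"
  let ?j = "min_remainder_index I A W i" and ?c = "inner_member I A (W \<union> T)"
  have c: "?c \<in> I" "A ?c \<subseteq> W \<union> T"
    using inner_member_props[where j = ?j and Z = "W \<union> T"]
      reduced_member_props[OF assms(1,2), where A = A and W = W]
    unfolding T_def by auto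
  have "?c \<in> remainder_candidates I A W i"
    using c reduced_member_props(3)[OF assms(1,2), where A = A and W = W]
    unfolding remainder_candidates_def T_def by auto
  then have "card T \<le> card (A ?c - W)"
    using min_remainder_le[OF assms(1)] min_remainder_index_props(2)[OF assms(1,2)]
    unfolding T_def by metis
  moreover have "A ?c - W \<subseteq> T" using c by auto
  moreover have "finite T"
    using reduced_member_props(3)[OF assms(1,2)] assms(3) finite_subset unfolding T_def by metis
  ultimately have "A ?c - W = T" by (metis card_seteq)
  then show ?thesis unfolding T_def by auto
qed

definition decodings :: "'i set \<Rightarrow> ('i \<Rightarrow> 'a set) \<Rightarrow> nat \<Rightarrow> 'a set \<Rightarrow> ('a set \<times> 'i) set" where
  "decodings I A t Z = {(T, i). (\<exists>j\<in>I. A j \<subseteq> Z) \<and> T \<subseteq> A (inner_member I A Z) \<and> card T = t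
                                \<and> i \<in> I \<and> T \<subseteq> A i}"

lemma decodings_eq_Sigma:
  assumes "j \<in> I" "A j \<subseteq> Z"
  shows "decodings I A t Z
       = Sigma {T. T \<subseteq> A (inner_member I A Z) \<and> card T = t} (\<lambda>T. {i\<in>I. T \<subseteq> A i})"
  unfolding decodings_def using assms by auto

lemma finite_decodings:
  assumes "finite I" "\<And>i. i \<in> I \<Longrightarrow> finite (A i)"
  shows "finite (decodings I A t Z)"
proof (cases "\<exists>j\<in>I. A j \<subseteq> Z")
  case True
  then obtain j where "j \<in> I" "A j \<subseteq> Z" by blast
  then show ?thesis
    using decodings_eq_Sigma[of j I A Z t] inner_member_props[of j I A Z] assms by auto
next
  case False
  then show ?thesis unfolding decodings_def by auto
qed

lemma card_decodings_le:
  assumes "finite I" and fin: "\<And>i. i \<in> I \<Longrightarrow> finite (A i) \<and> card (A i) \<le> a"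
    and spread: "\<And>Z. Z \<noteq> {} \<Longrightarrow> real (card {i\<in>I. Z \<subseteq> A i}) \<le> M / r ^ card Z"
    and "0 \<le> M" "0 < r" "0 < t"
  shows "real (card (decodings I A t Z)) \<le> 2 ^ a * M / r ^ t"
proof (cases "\<exists>j\<in>I. A j \<subseteq> Z")
  case True
  then obtain j where j: "j \<in> I" "A j \<subseteq> Z" by blast
  define c where "c = inner_member I A Z"
  have c: "finite (A c)" "card (A c) \<le> a"
    using inner_member_props[where A = A, OF j] fin unfolding c_def by auto
  define X where "X = {T. T \<subseteq> A c \<and> card T = t}"
  have "finite X" unfolding X_def using c by auto
  then have "real (card (decodings I A t Z)) = (\<Sum>T\<in>X. real (card {i\<in>I. T \<subseteq> A i}))"
    unfolding decodings_eq_Sigma[where A = A, OF j] X_def c_def using \<open>finite I\<close> by simp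
  also have "\<dots> \<le> (\<Sum>T\<in>X. M / r ^ t)"
  proof (rule sum_mono)
    fix T assume "T \<in> X"
    then have "T \<noteq> {}" "card T = t" using \<open>0 < t\<close> unfolding X_def by auto
    then show "real (card {i\<in>I. T \<subseteq> A i}) \<le> M / r ^ t" using spread by metis
  qed
  also have "\<dots> \<le> 2 ^ a * (M / r ^ t)"
  proof -
    have "card X \<le> card (Pow (A c))" unfolding X_def by (rule card_mono) (use c in auto)
    also have "\<dots> \<le> 2 ^ a" using c by (simp add: card_Pow power_increasing)
    finally have "real (card X) \<le> 2 ^ a" by (metis of_nat_le_iff of_nat_numeral of_nat_power)
    then have "real (card X) * (M / r ^ t) \<le> 2 ^ a * (M / r ^ t)"
      using assms by (intro mult_right_mono) simp_all
    then show ?thesis by simp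
  qed
  finally show ?thesis by simp
next
  case False
  then show ?thesis unfolding decodings_def using assms by auto
qed

definition remainder_code :: "'i set \<Rightarrow> ('i \<Rightarrow> 'a set) \<Rightarrow> 'a set \<times> 'i \<Rightarrow> 'a set \<times> 'a set \<times> 'i" where
  "remainder_code I A = (\<lambda>(W, i). (W \<union> reduced_member I A W i, reduced_member I A W i, i))"

lemma inj_on_remainder_code:
  assumes "finite I"
  shows "inj_on (remainder_code I A) (UNIV \<times> I)"
proof (rule inj_onI)
  fix p p' assume "p \<in> UNIV \<times> I" "p' \<in> UNIV \<times> I" and eq: "remainder_code I A p = remainder_code I A p'"
  then obtain W i W' i' where p: "p = (W, i)" "p' = (W', i')" "i \<in> I" "i' \<in> I" by auto
  have "W = (W \<union> reduced_member I A W i) - reduced_member I A W i"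
    "W' = (W' \<union> reduced_member I A W' i') - reduced_member I A W' i'"
    using reduced_member_props(4)[OF assms p(3), where A = A and W = W]
      reduced_member_props(4)[OF assms p(4), where A = A and W = W'] by auto
  then show "p = p'" using eq unfolding p remainder_code_def by auto
qed

lemma remainder_code_in_decodings:
  assumes "finite I" "i \<in> I" "W \<subseteq> U" "A i \<subseteq> U" "finite (A i)"
  shows "remainder_code I A (W, i) \<in> Sigma (Pow U) (decodings I A (min_remainder I A W i))"
proof -
  let ?T = "reduced_member I A W i"
  have "min_remainder_index I A W i \<in> I" "A (min_remainder_index I A W i) \<subseteq> W \<union> ?T" "?T \<subseteq> A i"
    using reduced_member_props(1-3)[OF assms(1,2), where A = A and W = W] by auto
  moreover have "?T \<subseteq> A (inner_member I A (W \<union> ?T))"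
    using reduced_member_recoverable[where A = A and W = W, OF assms(1,2,5)] .
  ultimately show ?thesis
    using min_remainder_index_props(2)[OF assms(1,2), where A = A and W = W] assms
    unfolding remainder_code_def decodings_def by auto
qed

text \<open>Encoding \<open>(W, i)\<close> by \<open>(W \<union> T, (T, i))\<close> costs a factor \<open>\<rho>^t\<close> in weight, and there are
  few decodings of any given \<open>W \<union> T\<close>.\<close>

lemma expected_min_remainder_count:
  assumes finU: "finite U" and finI: "finite I"
    and A: "\<And>i. i \<in> I \<Longrightarrow> A i \<subseteq> U \<and> card (A i) \<le> a"
    and spread: "\<And>Z. Z \<noteq> {} \<Longrightarrow> real (card {i\<in>I. Z \<subseteq> A i}) \<le> M / r ^ card Z"
    and "0 \<le> M" "0 < r" and \<rho>: "0 < \<rho>" "\<rho> \<le> 1" and "0 < t"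
  shows "binomial_expectation \<rho> U (\<lambda>W. real (card {i\<in>I. min_remainder I A W i = t}))
       \<le> 2 ^ a * M / (\<rho> * r) ^ t"
proof -
  let ?w = "binomial_weight \<rho> U" and ?F = "remainder_code I A"
  define P where "P = Sigma (Pow U) (\<lambda>W. {i\<in>I. min_remainder I A W i = t})"
  define Q where "Q = Sigma (Pow U) (decodings I A t)"
  have finA: "finite (A i)" if "i \<in> I" for i using A[OF that] finU finite_subset by blast
  have inj: "inj_on ?F P"
    using inj_on_remainder_code[OF finI] by (rule inj_on_subset) (auto simp: P_def)
  have "?F ` P \<subseteq> Q"
  proof (rule image_subsetI)
    fix p assume "p \<in> P"
    then obtain W i where p: "p = (W, i)" "W \<subseteq> U" "i \<in> I" "min_remainder I A W i = t"
      unfolding P_def by auto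
    then show "?F p \<in> Q"
      using remainder_code_in_decodings[where A = A, OF finI p(3) p(2) _ finA[OF p(3)]] A[OF p(3)]
      unfolding Q_def by simp
  qed
  have shift: "?w (fst p) \<le> ?w (fst (?F p)) / \<rho> ^ t" if "p \<in> P" for p
  proof -
    obtain W i where p: "p = (W, i)" "W \<subseteq> U" "i \<in> I" "min_remainder I A W i = t"
      using \<open>p \<in> P\<close> unfolding P_def by auto
    then show ?thesis
      using binomial_weight_le_union[OF finU p(2) _ _ \<rho>, of "reduced_member I A W i"] A[OF p(3)]
        reduced_member_props(3,4)[OF finI p(3), where A = A and W = W]
        min_remainder_index_props(2)[OF finI p(3), where A = A and W = W]
      unfolding remainder_code_def by auto
  qed
  have "binomial_expectation \<rho> U (\<lambda>W. real (card {i\<in>I. min_remainder I A W i = t}))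
      = (\<Sum>p\<in>P. ?w (fst p))"
    unfolding P_def using finU finI by (intro binomial_expectation_card) auto
  also have "\<dots> \<le> (\<Sum>p\<in>P. ?w (fst (?F p)) / \<rho> ^ t)"
    using shift by (intro sum_mono) auto
  also have "\<dots> = (\<Sum>q\<in>?F ` P. ?w (fst q)) / \<rho> ^ t"
    by (simp add: sum_divide_distrib sum.reindex[OF inj])
  also have "\<dots> \<le> (\<Sum>q\<in>Q. ?w (fst q)) / \<rho> ^ t"
    using \<open>?F ` P \<subseteq> Q\<close> finU finI finA \<rho>
    by (intro divide_right_mono sum_mono2 binomial_weight_nonneg)
      (auto simp: Q_def finite_decodings)
  also have "(\<Sum>q\<in>Q. ?w (fst q)) = binomial_expectation \<rho> U (\<lambda>Z. real (card (decodings I A t Z)))"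
    unfolding Q_def using finU finI finA
    by (intro binomial_expectation_card[symmetric]) (auto simp: finite_decodings)
  also have "\<dots> / \<rho> ^ t \<le> binomial_expectation \<rho> U (\<lambda>_. 2 ^ a * M / r ^ t) / \<rho> ^ t"
    using assms finA
    by (intro divide_right_mono binomial_expectation_mono card_decodings_le) auto
  also have "\<dots> = 2 ^ a * M / (\<rho> * r) ^ t"
    using finU by (simp add: binomial_expectation_const power_mult_distrib mult.commute)
  finally show ?thesis .
qed

lemma two_pow_mult_sixteenth_pow_le: "(2::real) ^ L * (1/16) ^ (2 ^ L) \<le> (1/2) ^ (L + 3)"
proof -
  have "2 * L + 3 \<le> 4 * 2 ^ L" by (induction L) auto
  then have "(2::real) ^ (2 * L + 3) \<le> 2 ^ (4 * 2 ^ L)" by (rule power_increasing) simp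
  moreover have "(2::real) ^ (2 * L + 3) = 2 ^ L * 2 ^ (L + 3)" by (simp add: power_add[symmetric])
  moreover have "(2::real) ^ (4 * 2 ^ L) = 16 ^ (2 ^ L)" by (simp add: power_mult)
  ultimately show ?thesis by (simp add: field_simps power_one_over)
qed

lemma two_pow_div_pow_le:
  fixes x :: real
  assumes "64 \<le> x" "2 ^ L \<le> t" "a \<le> 2 * t"
  shows "2 ^ a / x ^ t \<le> (1/16) ^ (2 ^ L)"
proof -
  have "(2::real) ^ a \<le> 4 ^ t"
    using power_increasing[OF assms(3), of "2::real"] by (simp add: power_mult)
  moreover have "(64::real) ^ t \<le> x ^ t" using assms(1) by (intro power_mono) auto
  ultimately have "2 ^ a / x ^ t \<le> (4::real) ^ t / 64 ^ t" by (intro frac_le) auto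
  also have "\<dots> = (1/16) ^ t" by (simp add: power_divide[symmetric])
  also have "\<dots> \<le> (1/16) ^ (2 ^ L)" using assms(2) by (intro power_decreasing) auto
  finally show ?thesis .
qed

lemma expected_long_remainder_count:
  assumes finU: "finite U" and finI: "finite I"
    and A: "\<And>i. i \<in> I \<Longrightarrow> A i \<subseteq> U \<and> card (A i) \<le> 2 ^ Suc L - 1"
    and spread: "\<And>Z. Z \<noteq> {} \<Longrightarrow> real (card {i\<in>I. Z \<subseteq> A i}) \<le> M / r ^ card Z"
    and M: "0 \<le> M" and "0 < r" and \<rho>: "0 < \<rho>" "\<rho> \<le> 1" and big: "64 \<le> \<rho> * r"
  shows "binomial_expectation \<rho> U (\<lambda>W. real (card {i\<in>I. 2 ^ L - 1 < min_remainder I A W i}))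
       \<le> M * (1/2) ^ (L + 3)"
proof -
  define a :: nat where "a = 2 ^ Suc L - 1"
  define b :: nat where "b = 2 ^ L - 1"
  have le_a: "min_remainder I A W i \<le> a" if "i \<in> I" for W i
  proof -
    have "finite (A i)" using A[OF that] finU finite_subset by blast
    then have "card (A i - W) \<le> card (A i)" by (intro card_mono) auto
    then show ?thesis
      using min_remainder_le_self[OF finI that, where A = A and W = W] A[OF that]
      unfolding a_def by linarith
  qed
  have split: "real (card {i\<in>I. b < min_remainder I A W i})
      = (\<Sum>t\<in>{b<..a}. real (card {i\<in>I. min_remainder I A W i = t}))" for W
  proof -
    have "{i\<in>I. b < min_remainder I A W i} = (\<Union>t\<in>{b<..a}. {i\<in>I. min_remainder I A W i = t})"
      using le_a by auto
    moreover have "card (\<Union>t\<in>{b<..a}. {i\<in>I. min_remainder I A W i = t})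
        = (\<Sum>t\<in>{b<..a}. card {i\<in>I. min_remainder I A W i = t})"
      by (rule card_UN_disjoint) (use finI in auto)
    ultimately show ?thesis by simp
  qed
  have term_le: "2 ^ a * M / (\<rho> * r) ^ t \<le> M * (1/16) ^ (2 ^ L)" if "t \<in> {b<..a}" for t
  proof -
    have "2 ^ a / (\<rho> * r) ^ t \<le> (1/16::real) ^ (2 ^ L)"
      using big that unfolding a_def b_def by (intro two_pow_div_pow_le) auto
    then have "M * (2 ^ a / (\<rho> * r) ^ t) \<le> M * (1/16) ^ (2 ^ L)" using M by (rule mult_left_mono)
    then show ?thesis by (simp add: mult.commute)
  qed
  have "binomial_expectation \<rho> U (\<lambda>W. real (card {i\<in>I. b < min_remainder I A W i}))
      = (\<Sum>t\<in>{b<..a}. binomial_expectation \<rho> U (\<lambda>W. real (card {i\<in>I. min_remainder I A W i = t})))"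
    by (simp add: split binomial_expectation_sum)
  also have "\<dots> \<le> (\<Sum>t\<in>{b<..a}. 2 ^ a * M / (\<rho> * r) ^ t)"
    using assms unfolding a_def by (intro sum_mono expected_min_remainder_count) auto
  also have "\<dots> \<le> (\<Sum>t\<in>{b<..a}. M * (1/16) ^ (2 ^ L))"
    using term_le by (rule sum_mono)
  also have "\<dots> = M * (2 ^ L * (1/16) ^ (2 ^ L))"
    unfolding a_def b_def by simp
  also have "\<dots> \<le> M * (1/2) ^ (L + 3)"
    using M two_pow_mult_sixteenth_pow_le by (rule mult_left_mono[rotated])
  finally show ?thesis unfolding b_def .
qed

definition uncovered :: "'i set \<Rightarrow> ('i \<Rightarrow> 'a set) \<Rightarrow> 'a set \<Rightarrow> real" where
  "uncovered I A W = (if \<exists>i\<in>I. A i \<subseteq> W then 0 else 1)"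

lemma uncovered_nonneg: "0 \<le> uncovered I A W"
  and uncovered_le_one: "uncovered I A W \<le> 1"
  unfolding uncovered_def by auto

lemma uncovered_union_le_reduced:
  assumes "finite I" "J \<subseteq> I"
  shows "uncovered I A (W1 \<union> W2) \<le> uncovered J (reduced_member I A W1) W2"
proof (cases "\<exists>i\<in>J. reduced_member I A W1 i \<subseteq> W2")
  case True
  then obtain i where i: "i \<in> I" "reduced_member I A W1 i \<subseteq> W2" using assms(2) by auto
  then have "A (min_remainder_index I A W1 i) \<subseteq> W1 \<union> W2"
    using reduced_member_props(2)[OF assms(1) i(1), where A = A and W = W1] by auto
  then show ?thesis
    using reduced_member_props(1)[OF assms(1) i(1), where A = A and W = W1]
    unfolding uncovered_def by auto
qed (simp add: uncovered_def)

lemma card_reduced_members_containing_le: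
  assumes "finite I" "J \<subseteq> I"
  shows "card {i\<in>J. Z \<subseteq> reduced_member I A W i} \<le> card {i\<in>I. Z \<subseteq> A i}"
proof (rule card_mono)
  show "finite {i\<in>I. Z \<subseteq> A i}" using assms(1) by simp
  show "{i\<in>J. Z \<subseteq> reduced_member I A W i} \<subseteq> {i\<in>I. Z \<subseteq> A i}"
    using reduced_member_props(3)[OF assms(1), where A = A and W = W] assms(2) by blast
qed

lemma card_mult_expectation_le_split:
  assumes "finite U" "finite I" "J \<subseteq> I" "0 \<le> \<delta>" "\<delta> \<le> 1"
    and "\<And>W. 0 \<le> f W" "\<And>W. f W \<le> 1"
  shows "real (card I) * binomial_expectation \<delta> U f
       \<le> real (card (I - J)) + real (card J) * binomial_expectation \<delta> U f"
proof -
  have "binomial_expectation \<delta> U f \<le> 1"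
    using binomial_expectation_mono[OF assms(4,5), of U f "\<lambda>_. 1"] assms
    by (simp add: binomial_expectation_const)
  then have "real (card (I - J)) * binomial_expectation \<delta> U f \<le> real (card (I - J))"
    by (rule mult_left_le) simp
  moreover have "card I = card (I - J) + card J"
    using assms(2,3) by (metis card_Diff_subset card_mono finite_subset le_add_diff_inverse2)
  ultimately show ?thesis by (simp add: algebra_simps mult_left_le)
qed

text \<open>Induction on the number \<open>L\<close> of rounds, the round of density \<open>\<rho>\<close> being exposed first: members
  whose reduced member is still longer than \<open>2^L - 1\<close> are charged in full, the others form a
  family to which the induction hypothesis applies.\<close>

lemma uncovered_expectation_le:
  assumes finU: "finite U" and M: "0 \<le> M" and r: "0 < r" and \<rho>: "0 < \<rho>" "\<rho> \<le> 1"
    and big: "64 \<le> \<rho> * r"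
  shows "finite I \<Longrightarrow> (\<And>i. i \<in> I \<Longrightarrow> A i \<subseteq> U \<and> card (A i) \<le> 2 ^ L - 1)
    \<Longrightarrow> (\<And>Z. Z \<noteq> {} \<Longrightarrow> real (card {i\<in>I. Z \<subseteq> A i}) \<le> M / r ^ card Z)
    \<Longrightarrow> real (card I) * binomial_expectation (1 - (1 - \<rho>) ^ L) U (uncovered I A)
        \<le> M / 4 * (1 - (1/2) ^ L)"
proof (induction L arbitrary: I A)
  case 0
  then have "A i = {}" if "i \<in> I" for i using that finU finite_subset by fastforce
  then have "uncovered I A W = (if I = {} then 1 else 0)" for W unfolding uncovered_def by auto
  then show ?case using finU by (simp add: binomial_expectation_const)
next
  case (Suc L)
  let ?E = binomial_expectation
  define \<delta> where "\<delta> = 1 - (1 - \<rho>) ^ L"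
  have \<delta>: "0 \<le> \<delta>" "\<delta> \<le> 1" unfolding \<delta>_def using \<rho> by (auto simp: power_le_one)
  have density: "1 - (1 - \<rho>) ^ Suc L = \<rho> + \<delta> - \<rho> * \<delta>" unfolding \<delta>_def by (simp add: algebra_simps)
  define short where "short W = {i\<in>I. min_remainder I A W i \<le> 2 ^ L - 1}" for W
  define long where "long W = real (card (I - short W))" for W
  have long_eq: "long W = real (card {i\<in>I. 2 ^ L - 1 < min_remainder I A W i})" for W
    unfolding long_def short_def by (rule arg_cong[where f = "\<lambda>X. real (card X)"]) auto
  let ?A' = "reduced_member I A"
  have union_covered: "uncovered I A (W1 \<union> W2) \<le> uncovered (short W1) (?A' W1) W2" for W1 W2
    using Suc.prems(1) by (intro uncovered_union_le_reduced) (auto simp: short_def)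
  have IH: "real (card (short W)) * ?E \<delta> U (uncovered (short W) (?A' W)) \<le> M / 4 * (1 - (1/2) ^ L)"
    for W unfolding \<delta>_def
  proof (rule Suc.IH)
    show "finite (short W)" unfolding short_def using Suc.prems(1) by auto
  next
    fix i assume "i \<in> short W"
    then show "?A' W i \<subseteq> U \<and> card (?A' W i) \<le> 2 ^ L - 1"
      using reduced_member_props(3)[OF Suc.prems(1), where A = A and W = W]
        min_remainder_index_props(2)[OF Suc.prems(1), where A = A and W = W] Suc.prems(2)
      unfolding short_def by fastforce
  next
    fix Z :: "'a set" assume "Z \<noteq> {}"
    have "card {i\<in>short W. Z \<subseteq> ?A' W i} \<le> card {i\<in>I. Z \<subseteq> A i}"
      using Suc.prems(1) by (intro card_reduced_members_containing_le) (auto simp: short_def)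
    then show "real (card {i\<in>short W. Z \<subseteq> ?A' W i}) \<le> M / r ^ card Z"
      using Suc.prems(3)[OF \<open>Z \<noteq> {}\<close>] by linarith
  qed
  have step: "real (card I) * ?E \<delta> U (uncovered (short W) (?A' W)) \<le> long W + M / 4 * (1 - (1/2) ^ L)"
    for W
  proof -
    have "short W \<subseteq> I" unfolding short_def by auto
    then show ?thesis
      using card_mult_expectation_le_split[where J = "short W" and f = "uncovered (short W) (?A' W)",
          OF finU Suc.prems(1) _ \<delta> uncovered_nonneg uncovered_le_one] IH[of W]
      unfolding long_def by linarith
  qed
  have "real (card I) * ?E (1 - (1 - \<rho>) ^ Suc L) U (uncovered I A)
      = real (card I) * ?E \<rho> U (\<lambda>W1. ?E \<delta> U (\<lambda>W2. uncovered I A (W1 \<union> W2)))"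
    unfolding density binomial_expectation_union[OF finU] ..
  also have "\<dots> \<le> real (card I) * ?E \<rho> U (\<lambda>W1. ?E \<delta> U (uncovered (short W1) (?A' W1)))"
    using \<rho> \<delta> union_covered
    by (intro mult_left_mono binomial_expectation_mono) auto
  also have "\<dots> = ?E \<rho> U (\<lambda>W1. real (card I) * ?E \<delta> U (uncovered (short W1) (?A' W1)))"
    by (simp add: binomial_expectation_cmult)
  also have "\<dots> \<le> ?E \<rho> U (\<lambda>W1. long W1 + M / 4 * (1 - (1/2) ^ L))"
    using \<rho> step by (intro binomial_expectation_mono) auto
  also have "\<dots> = ?E \<rho> U long + M / 4 * (1 - (1/2) ^ L)"
    by (simp add: binomial_expectation_add binomial_expectation_const[OF finU])
  also have "\<dots> \<le> M * (1/2) ^ (L + 3) + M / 4 * (1 - (1/2) ^ L)"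
    unfolding long_eq
    by (intro add_right_mono expected_long_remainder_count[OF finU Suc.prems(1) _ Suc.prems(3) M r \<rho> big])
      (use Suc.prems(2) in auto)
  also have "\<dots> = M / 4 * (1 - (1/2) ^ Suc L)"
    by (simp add: field_simps power_add)
  finally show ?case .
qed

lemma uncovered_expectation_le_quarter:
  assumes "finite U" "finite I" "\<And>i. i \<in> I \<Longrightarrow> A i \<subseteq> U \<and> card (A i) \<le> 2 ^ L - 1"
    and "\<And>Z. Z \<noteq> {} \<Longrightarrow> real (card {i\<in>I. Z \<subseteq> A i}) \<le> M / r ^ card Z"
    and "0 \<le> M" "M < real (card I)" "0 < r" "0 < \<rho>" "\<rho> \<le> 1" "64 \<le> \<rho> * r"
  shows "binomial_expectation (1 - (1 - \<rho>) ^ L) U (uncovered I A) \<le> 1/4"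
proof -
  have "real (card I) * binomial_expectation (1 - (1 - \<rho>) ^ L) U (uncovered I A)
      \<le> M / 4 * (1 - (1/2) ^ L)"
    using assms by (intro uncovered_expectation_le) auto
  also have "\<dots> \<le> M / 4" using \<open>0 \<le> M\<close> by (simp add: mult_left_le)
  also have "\<dots> \<le> real (card I) * (1/4)" using \<open>M < real (card I)\<close> by simp
  finally show ?thesis using \<open>0 \<le> M\<close> \<open>M < real (card I)\<close> by simp
qed

lemma card_colourings_with_class:
  assumes "finite U" "W \<subseteq> U" "c < q"
  shows "card {g \<in> Pi\<^sub>E U (\<lambda>_. {..<q}). {u\<in>U. g u = c} = W} = (q - 1) ^ card (U - W)"
proof -
  define extend where "extend h = (\<lambda>u. if u \<in> W then c else h u)" for h :: "'a \<Rightarrow> nat"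
  define H where "H = Pi\<^sub>E (U - W) (\<lambda>_. {..<q} - {c})"
  have "{g \<in> Pi\<^sub>E U (\<lambda>_. {..<q}). {u\<in>U. g u = c} = W} = extend ` H"
  proof (intro equalityI subsetI)
    fix g assume g: "g \<in> {g \<in> Pi\<^sub>E U (\<lambda>_. {..<q}). {u\<in>U. g u = c} = W}"
    have "g = extend (restrict g (U - W))"
      using g assms(2) unfolding extend_def PiE_iff extensional_def by fastforce
    moreover have "restrict g (U - W) \<in> H" using g unfolding H_def PiE_iff by auto
    ultimately show "g \<in> extend ` H" by blast
  next
    fix g assume "g \<in> extend ` H"
    then show "g \<in> {g \<in> Pi\<^sub>E U (\<lambda>_. {..<q}). {u\<in>U. g u = c} = W}"
      using assms(2,3) unfolding H_def extend_def PiE_iff extensional_def by auto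
  qed
  moreover have "inj_on extend H"
  proof (rule inj_onI)
    fix h h' assume hh': "h \<in> H" "h' \<in> H" "extend h = extend h'"
    show "h = h'"
    proof
      fix u
      show "h u = h' u"
      proof (cases "u \<in> U - W")
        case True
        then show ?thesis using fun_cong[OF hh'(3), of u] unfolding extend_def by auto
      next
        case False
        then show ?thesis using hh'(1,2) unfolding H_def PiE_iff extensional_def by auto
      qed
    qed
  qed
  ultimately show ?thesis
    using assms unfolding H_def by (simp add: card_image card_PiE)
qed

lemma sum_colourings_class:
  assumes finU: "finite U" and "c < q"
  shows "(\<Sum>g\<in>Pi\<^sub>E U (\<lambda>_. {..<q}). f {u\<in>U. g u = c})
       = real q ^ card U * binomial_expectation (1 / real q) U f"
proof -
  define G where "G = Pi\<^sub>E U (\<lambda>_. {..<q})"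
  have q: "real q * (1 / real q) = 1" "real q * (1 - 1 / real q) = real (q - 1)"
    using \<open>c < q\<close> by (auto simp: field_simps of_nat_diff)
  have weight: "real (q - 1) ^ card (U - W) = real q ^ card U * binomial_weight (1 / real q) U W"
    if "W \<subseteq> U" for W
  proof -
    have card_U: "card U = card W + card (U - W)"
      using that finU by (metis card_Diff_subset card_mono finite_subset le_add_diff_inverse)
    have "real q ^ card U * binomial_weight (1 / real q) U W
        = (real q * (1 / real q)) ^ card W * (real q * (1 - 1 / real q)) ^ card (U - W)"
      unfolding binomial_weight_def power_mult_distrib card_U power_add by (simp only: ac_simps)
    then show ?thesis unfolding q by simp
  qed
  have "(\<Sum>g\<in>G. f {u\<in>U. g u = c})
      = (\<Sum>W\<in>Pow U. \<Sum>g\<in>{g\<in>G. {u\<in>U. g u = c} = W}. f {u\<in>U. g u = c})"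
    by (rule sum.group[symmetric]) (auto simp: G_def finU finite_PiE)
  also have "\<dots> = (\<Sum>W\<in>Pow U. real (card {g\<in>G. {u\<in>U. g u = c} = W}) * f W)"
  proof (rule sum.cong)
    fix W
    have "(\<Sum>g\<in>{g\<in>G. {u\<in>U. g u = c} = W}. f {u\<in>U. g u = c})
        = (\<Sum>g\<in>{g\<in>G. {u\<in>U. g u = c} = W}. f W)"
      by (rule sum.cong) auto
    then show "(\<Sum>g\<in>{g\<in>G. {u\<in>U. g u = c} = W}. f {u\<in>U. g u = c})
        = real (card {g\<in>G. {u\<in>U. g u = c} = W}) * f W" by simp
  qed simp
  also have "\<dots> = (\<Sum>W\<in>Pow U. real (q - 1) ^ card (U - W) * f W)"
    unfolding G_def using card_colourings_with_class[OF finU _ \<open>c < q\<close>] by simp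
  also have "\<dots> = real q ^ card U * binomial_expectation (1 / real q) U f"
    unfolding binomial_expectation_def sum_distrib_left by (intro sum.cong refl) (simp only: weight PowD mult.assoc)
  finally show ?thesis unfolding G_def .
qed

lemma exists_colouring_few_uncovered_classes:
  assumes finU: "finite U" and "0 < q"
  shows "\<exists>g\<in>Pi\<^sub>E U (\<lambda>_. {..<q}).
           (\<Sum>c<q. uncovered I A {u\<in>U. g u = c}) \<le> real q * binomial_expectation (1 / real q) U (uncovered I A)"
proof (rule ccontr)
  define G where "G = Pi\<^sub>E U (\<lambda>_. {..<q})"
  let ?avg = "real q * binomial_expectation (1 / real q) U (uncovered I A)"
  assume "\<not> ?thesis"
  then have "\<forall>g\<in>G. ?avg < (\<Sum>c<q. uncovered I A {u\<in>U. g u = c})" unfolding G_def by force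
  moreover have "finite G" "card G = q ^ card U" unfolding G_def using finU by (auto simp: card_PiE finite_PiE)
  moreover have "G \<noteq> {}" using \<open>card G = q ^ card U\<close> \<open>0 < q\<close> by (metis card.empty power_not_zero not_gr0)
  ultimately have "(\<Sum>g\<in>G. ?avg) < (\<Sum>g\<in>G. \<Sum>c<q. uncovered I A {u\<in>U. g u = c})"
    by (intro sum_strict_mono) auto
  also have "\<dots> = (\<Sum>c<q. real q ^ card U * binomial_expectation (1 / real q) U (uncovered I A))"
    unfolding G_def by (subst sum.swap) (simp add: sum_colourings_class[OF finU])
  also have "\<dots> = (\<Sum>g\<in>G. ?avg)" using \<open>card G = q ^ card U\<close> by simp
  finally show False by simp
qed

lemma disjoint_members_in_distinct_classes:
  assumes "\<And>i. i \<in> I \<Longrightarrow> A i \<noteq> {}" "p \<le> card C" "\<And>c. c \<in> C \<Longrightarrow> \<exists>i\<in>I. A i \<subseteq> g -` {c}"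
  shows "\<exists>J\<subseteq>I. card J = p \<and> (\<forall>i\<in>J. \<forall>j\<in>J. i \<noteq> j \<longrightarrow> A i \<inter> A j = {})"
proof -
  obtain C' where C': "C' \<subseteq> C" "card C' = p" using obtain_subset_with_card_n[OF assms(2)] by blast
  define member where "member c = (SOME i. i \<in> I \<and> A i \<subseteq> g -` {c})" for c
  have member: "member c \<in> I \<and> A (member c) \<subseteq> g -` {c}" if "c \<in> C'" for c
  proof -
    have "\<exists>i. i \<in> I \<and> A i \<subseteq> g -` {c}" using assms(3) C'(1) that by blast
    then show ?thesis unfolding member_def by (rule someI_ex)
  qed
  have disjoint: "A (member c) \<inter> A (member c') = {}" if "c \<in> C'" "c' \<in> C'" "c \<noteq> c'" for c c'
    using member[OF that(1)] member[OF that(2)] that(3) by auto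
  have inj: "inj_on member C'"
  proof (rule inj_onI)
    fix c c' assume c: "c \<in> C'" "c' \<in> C'" "member c = member c'"
    obtain x where "x \<in> A (member c)" using member[OF c(1)] assms(1) by blast
    then show "c = c'" using member[OF c(1)] member[OF c(2)] c(3) by auto
  qed
  show ?thesis
  proof (intro exI[of _ "member ` C'"] conjI)
    show "member ` C' \<subseteq> I" using member by auto
    show "card (member ` C') = p" using card_image[OF inj] C' by simp
    show "\<forall>i\<in>member ` C'. \<forall>j\<in>member ` C'. i \<noteq> j \<longrightarrow> A i \<inter> A j = {}"
      using disjoint by auto
  qed
qed

lemma disjoint_members_if_rarely_uncovered:
  assumes finU: "finite U" and "0 < q" "p \<le> q" and nonempty: "\<And>i. i \<in> I \<Longrightarrow> A i \<noteq> {}"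
    and rare: "binomial_expectation (1 / real q) U (uncovered I A) \<le> 1 - real p / real q"
  shows "\<exists>J\<subseteq>I. card J = p \<and> (\<forall>i\<in>J. \<forall>j\<in>J. i \<noteq> j \<longrightarrow> A i \<inter> A j = {})"
proof -
  obtain g where "(\<Sum>c<q. uncovered I A {u\<in>U. g u = c})
      \<le> real q * binomial_expectation (1 / real q) U (uncovered I A)"
    using exists_colouring_few_uncovered_classes[OF finU \<open>0 < q\<close>] by blast
  moreover have "real q * binomial_expectation (1 / real q) U (uncovered I A) \<le> real q - real p"
    using mult_left_mono[OF rare, of "real q"] \<open>0 < q\<close> by (simp add: right_diff_distrib)
  ultimately have few: "(\<Sum>c<q. uncovered I A {u\<in>U. g u = c}) \<le> real q - real p" by linarith
  define C where "C = {c\<in>{..<q}. \<exists>i\<in>I. A i \<subseteq> {u\<in>U. g u = c}}"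
  have "C \<subseteq> {..<q}" unfolding C_def by auto
  then have "card C \<le> q" using card_mono[of "{..<q}" C] by simp
  have "(\<Sum>c<q. uncovered I A {u\<in>U. g u = c}) = (\<Sum>c<q. if c \<notin> C then 1 else 0)"
    unfolding uncovered_def C_def by (intro sum.cong) auto
  also have "\<dots> = real (card ({..<q} - C))"
    by (simp add: sum.inter_filter[symmetric] set_diff_eq)
  also have "\<dots> = real q - real (card C)"
    using \<open>C \<subseteq> {..<q}\<close> \<open>card C \<le> q\<close> by (simp add: card_Diff_subset finite_subset of_nat_diff)
  finally have "p \<le> card C" using few by simp
  with nonempty show ?thesis
    by (rule disjoint_members_in_distinct_classes[where I = I and A = A and g = g]) (auto simp: C_def)
qed

lemma exists_two_power_bracket:
  fixes k :: nat
  assumes "1 \<le> k"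
  shows "\<exists>L::nat. 1 \<le> L \<and> k \<le> 2 ^ L - 1 \<and> 2 ^ L \<le> 2 * k"
proof -
  obtain m where "2 ^ m \<le> k" "k < 2 ^ (m + 1)" using ex_power_ivl1[of 2 k] assms by auto
  then show ?thesis by (intro exI[of _ "m + 1"]) auto
qed

lemma exists_density_with_power:
  assumes "1 \<le> L" "0 < y" "y < 1"
  obtains \<rho> :: real where "0 < \<rho>" "\<rho> \<le> 1" "(1 - \<rho>) ^ L = y" "1 - y \<le> real L * \<rho>"
proof
  define \<rho> where "\<rho> = 1 - y powr (1 / real L)"
  show "\<rho> \<le> 1" unfolding \<rho>_def by simp
  show power: "(1 - \<rho>) ^ L = y"
    unfolding \<rho>_def using assms by (simp add: powr_power)
  have "1 + real L * (- \<rho>) \<le> (1 + - \<rho>) ^ L" using \<open>\<rho> \<le> 1\<close> by (intro Bernoulli_inequality) simp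
  then show "1 - y \<le> real L * \<rho>" using power by simp
  then have "0 < real L * \<rho>" using assms by linarith
  then show "0 < \<rho>" by (simp add: zero_less_mult_iff)
qed

lemma exists_round_parameters:
  fixes p k :: nat
  assumes "2 \<le> p" "1 \<le> k"
  defines "r \<equiv> 128 * real p * log 2 (real (p * k))"
  obtains L :: nat and \<rho> :: real
  where "k \<le> 2 ^ L - 1" "0 < \<rho>" "\<rho> \<le> 1" "(1 - \<rho>) ^ L = 1 - 1 / real (2 * p)"
    and "64 \<le> \<rho> * r" "0 < r"
proof -
  obtain L where L: "1 \<le> L" "k \<le> 2 ^ L - 1" "2 ^ L \<le> 2 * k"
    using exists_two_power_bracket[OF \<open>1 \<le> k\<close>] by blast
  have "real L \<le> log 2 (real (p * k))"
    using L(3) \<open>2 \<le> p\<close> by (intro le_log2_of_power) (simp add: order_trans)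
  then have r: "128 * real p * real L \<le> r" unfolding r_def by (intro mult_left_mono) auto
  moreover have "0 < 128 * real p * real L" using \<open>2 \<le> p\<close> L(1) by simp
  ultimately have "0 < r" by linarith
  obtain \<rho> where \<rho>: "0 < \<rho>" "\<rho> \<le> 1" "(1 - \<rho>) ^ L = 1 - 1 / real (2 * p)"
    and "1 / real (2 * p) \<le> real L * \<rho>"
    using exists_density_with_power[OF L(1), of "1 - 1 / real (2 * p)"] \<open>2 \<le> p\<close> by auto
  then have "64 \<le> \<rho> * (128 * real p * real L)" using \<open>2 \<le> p\<close> by (simp add: field_simps)
  also have "\<dots> \<le> \<rho> * r" using r \<rho>(1) by (intro mult_left_mono) auto
  finally show ?thesis using that L(2) \<rho> \<open>0 < r\<close> by blast
qed

lemma r_spread_count_le: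
  assumes "r_spread n k r l S" "\<And>i. i < l \<Longrightarrow> S i \<subseteq> {1..n}" "0 < r" "Z \<noteq> {}"
  shows "real (card {i\<in>{..<l}. Z \<subseteq> S i}) \<le> r ^ k / r ^ card Z"
proof (cases "Z \<subseteq> {1..n}")
  case True
  then have "real (card {i. i < l \<and> Z \<subseteq> S i}) \<le> r powr (real k - real (card Z))"
    using assms(1,4) unfolding r_spread_def by blast
  then show ?thesis using \<open>0 < r\<close> by (simp add: powr_diff powr_realpow)
next
  case False
  then have none: "{i\<in>{..<l}. Z \<subseteq> S i} = {}" using assms(2) by blast
  show ?thesis unfolding none using \<open>0 < r\<close> by simp
qed

theorem lemma2:
  "\<exists>\<alpha>::real. \<alpha> > 1 \<and>
    (\<forall>(p::nat) (k::nat) (n::nat) (l::nat) (S :: nat \<Rightarrow> nat set).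
       p \<ge> 2 \<longrightarrow> k \<ge> 1 \<longrightarrow> n \<ge> 1 \<longrightarrow>
       (\<forall>i<l. S i \<subseteq> {1..n} \<and> card (S i) = k) \<longrightarrow>
       real l > (\<alpha> * real p * log 2 (real (p * k))) ^ k \<longrightarrow>
       r_spread n k (\<alpha> * real p * log 2 (real (p * k))) l S \<longrightarrow>
       (\<exists>I. I \<subseteq> {..<l} \<and> card I = p \<and>
            (\<forall>i\<in>I. \<forall>j\<in>I. i \<noteq> j \<longrightarrow> S i \<inter> S j = {})))"
proof (intro exI[of _ "128::real"] conjI allI impI)
  fix p k n l :: nat and S :: "nat \<Rightarrow> nat set"
  define r where "r = 128 * real p * log 2 (real (p * k))"
  assume "2 \<le> p" "1 \<le> k" and S: "\<forall>i<l. S i \<subseteq> {1..n} \<and> card (S i) = k"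
    and "(128 * real p * log 2 (real (p * k))) ^ k < real l"
    and "r_spread n k (128 * real p * log 2 (real (p * k))) l S"
  then have many: "r ^ k < real (card {..<l})" and spread: "r_spread n k r l S"
    unfolding r_def by simp_all
  obtain L \<rho> where "k \<le> 2 ^ L - 1" "0 < \<rho>" "\<rho> \<le> 1" and \<rho>: "(1 - \<rho>) ^ L = 1 - 1 / real (2 * p)"
    and "64 \<le> \<rho> * r" "0 < r"
    using exists_round_parameters[OF \<open>2 \<le> p\<close> \<open>1 \<le> k\<close>] unfolding r_def by blast
  then have "binomial_expectation (1 - (1 - \<rho>) ^ L) {1..n} (uncovered {..<l} S) \<le> 1/4"
    using S many r_spread_count_le[OF spread _ \<open>0 < r\<close>]
    by (intro uncovered_expectation_le_quarter[where M = "r ^ k" and r = r]) auto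
  then have "binomial_expectation (1 / real (2 * p)) {1..n} (uncovered {..<l} S)
      \<le> 1 - real p / real (2 * p)"
    using \<rho> \<open>2 \<le> p\<close> by simp
  moreover have "S i \<noteq> {}" if "i \<in> {..<l}" for i using S that \<open>1 \<le> k\<close> by force
  ultimately show "\<exists>I\<subseteq>{..<l}. card I = p \<and> (\<forall>i\<in>I. \<forall>j\<in>I. i \<noteq> j \<longrightarrow> S i \<inter> S j = {})"
    using \<open>2 \<le> p\<close>
    by (intro disjoint_members_if_rarely_uncovered[where U = "{1..n}" and q = "2 * p"]) auto
qed simp

end
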